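(* Consider the upstream-downstream model described in the context, with $e_\rightarrow>e_\leftarrow$, and satisfying the fixation assumption. Let $d_\uparrow$ and $d_\downarrow$ be the death rates of each upstream and each downstream site, respectively. Then the overall fixation probability satisfies $\rho>1/N$, and consequently the molecular clock rate satisfies $K>u$, if and only if $d_\uparrow>d_\downarrow$.
   Context: General framework: $N$ sites, each occupied by an individual of type M or R; a replacement event is a pair $(R,\alpha)$ with $R\subseteq\{1,\ldots,N\}$, $\alpha:R\to\{1,\ldots,N\}$; a state-independent replacement rule $p(R,\alpha)$ drives the Markov chain where at each step an event is drawn and $s_i'=s_i$ for $i\notin R$, $s_i'=s_{\alpha(i)}$ for $i\in R$. Fixation assumption: there exist a site $i$ and a finite sequence of positive-probability events which, occurring consecutively, make every site carry the type initially at $i$. Define $e_{ij}=\sum_{(R,\alpha):\,j\in R,\,\alpha(j)=i}p(R,\alpha)$, $d_i=\sum_j e_{ji}$, $B=\sum_{i,j}e_{ij}$; $\rho_i$ is the probability that the chain started with M at site $i$ only is absorbed in all-M; $\rho=\frac1B\sum_i d_i\rho_i$; $K=Nu\rho$ for a mutation probability $u>0$. Upstream-downstream model: the sites are partitioned into $N_\uparrow\ge1$ upstream and $N_\downarrow\ge1$ downstream sites, $N=N_\uparrow+N_\downarrow$, with nonnegative constants $e_\uparrow,e_\downarrow,e_\rightarrow,e_\leftarrow$ such that $e_{ij}=e_\uparrow$ if $i,j$ are both upstream, $e_{ij}=e_\downarrow$ if both downstream, $e_{ij}=e_\rightarrow$ if $i$ is upstream and $j$ downstream, and $e_{ij}=e_\leftarrow$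 if $i$ is downstream and $j$ upstream. Then all upstream sites share a common death rate $d_\uparrow$ and all downstream sites a common death rate $d_\downarrow$, and $B=N_\uparrow d_\uparrow+N_\downarrow d_\downarrow$. *)

theory Defs
  imports "HOL-Probability.Probability"
begin

text \<open>Sites are 0,...,N-1. A state assigns to each site True (type M) or False (type R).
  A replacement event is a pair (R, alpha) with R a set of sites and alpha the parent map
  (only its values on R matter).\<close>

type_synonym event = "nat set \<times> (nat \<Rightarrow> nat)"
type_synonym state = "nat \<Rightarrow> bool"

definition apply_event :: "event \<Rightarrow> state \<Rightarrow> state" where
  "apply_event e s = (\<lambda>i. if i \<in> fst e then s (snd e i) else s i)"

definition valid_rule :: "event pmf \<Rightarrow> nat \<Rightarrow> bool" where
  "valid_rule p N \<longleftrightarrow> (\<forall>e \<in> set_pmf p. fst e \<subseteq> {..<N} \<and> snd e ` fst e \<subseteq> {..<N})"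

definition fixation_assumption :: "event pmf \<Rightarrow> nat \<Rightarrow> bool" where
  "fixation_assumption p N \<longleftrightarrow>
     (\<exists>i<N. \<exists>evs. (\<forall>e \<in> set evs. pmf p e > 0) \<and>
        (\<forall>s j. j < N \<longrightarrow> fold apply_event evs s j = s i))"

definition chain_dist :: "event pmf \<Rightarrow> nat \<Rightarrow> state \<Rightarrow> state pmf" where
  "chain_dist p n s0 =
     ((\<lambda>d. bind_pmf d (\<lambda>s. map_pmf (\<lambda>e. apply_event e s) p)) ^^ n) (return_pmf s0)"

text \<open>rho_i: probability that the chain started with M at site i only is absorbed in all-M
  (all-M is absorbing, so this is the limit of the probability of being all-M at time n).\<close>
definition fix_prob :: "event pmf \<Rightarrow> nat \<Rightarrow> nat \<Rightarrow> real" where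
  "fix_prob p N i = lim (\<lambda>n. pmf (chain_dist p n (\<lambda>j. j = i)) (\<lambda>j. j < N))"

definition edge_weight :: "event pmf \<Rightarrow> nat \<Rightarrow> nat \<Rightarrow> real" where
  "edge_weight p i j = measure_pmf.prob p {e. j \<in> fst e \<and> snd e j = i}"

definition death_rate :: "event pmf \<Rightarrow> nat \<Rightarrow> nat \<Rightarrow> real" where
  "death_rate p N i = (\<Sum>j<N. edge_weight p j i)"

definition total_B :: "event pmf \<Rightarrow> nat \<Rightarrow> real" where
  "total_B p N = (\<Sum>i<N. \<Sum>j<N. edge_weight p i j)"

definition overall_rho :: "event pmf \<Rightarrow> nat \<Rightarrow> real" where
  "overall_rho p N = (1 / total_B p N) * (\<Sum>i<N. death_rate p N i * fix_prob p N i)"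

definition clock_K :: "event pmf \<Rightarrow> nat \<Rightarrow> real \<Rightarrow> real" where
  "clock_K p N u = real N * u * overall_rho p N"

definition upstream_downstream ::
  "event pmf \<Rightarrow> nat \<Rightarrow> nat set \<Rightarrow> nat set \<Rightarrow> real \<Rightarrow> real \<Rightarrow> real \<Rightarrow> real \<Rightarrow> bool" where
  "upstream_downstream p N U D eU eD eR eL \<longleftrightarrow>
     U \<union> D = {..<N} \<and> U \<inter> D = {} \<and> U \<noteq> {} \<and> D \<noteq> {} \<and>
     eU \<ge> 0 \<and> eD \<ge> 0 \<and> eR \<ge> 0 \<and> eL \<ge> 0 \<and>
     (\<forall>i\<in>U. \<forall>j\<in>U. edge_weight p i j = eU) \<and>
     (\<forall>i\<in>D. \<forall>j\<in>D. edge_weight p i j = eD) \<and>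
     (\<forall>i\<in>U. \<forall>j\<in>D. edge_weight p i j = eR) \<and>
     (\<forall>i\<in>D. \<forall>j\<in>U. edge_weight p i j = eL)"

end

theory Submission
  imports Defs
begin

text \<open>Let \<open>\<pi>\<close> be normalised reproductive values, i.e. a solution of \<open>\<pi>\<^sub>k d\<^sub>k = \<Sum>\<^sub>i e\<^sub>k\<^sub>i \<pi>\<^sub>i\<close> with
  \<open>\<Sum>\<^sub>i \<pi>\<^sub>i = 1\<close>. The \<open>\<pi>\<close>-weighted number of mutants is then a martingale of the chain, and by the
  fixation assumption the chain is absorbed, geometrically fast, in all-M or all-R, where this martingale
  is 1 or 0; hence \<open>\<rho>\<^sub>i = \<pi>\<^sub>i\<close>. In the upstream-downstream model \<open>\<pi>\<close> is proportional to \<open>e\<^sub>\<rightarrow>\<close> on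
  upstream and to \<open>e\<^sub>\<leftarrow>\<close> on downstream sites, and with \<open>a = N\<^sub>\<up>\<close>, \<open>b = N\<^sub>\<down>\<close> and
  \<open>Z = a e\<^sub>\<rightarrow> + b e\<^sub>\<leftarrow>\<close> one computes
  \<open>N \<Sum>\<^sub>i d\<^sub>i \<rho>\<^sub>i - B = a b (e\<^sub>\<rightarrow> - e\<^sub>\<leftarrow>) (d\<^sub>\<up> - d\<^sub>\<down>) / Z\<close>, whose sign is that of \<open>d\<^sub>\<up> - d\<^sub>\<down>\<close>.\<close>

lemma integrable_measure_pmf_bounded:
  fixes f :: "'a \<Rightarrow> real"
  assumes "\<And>x. \<bar>f x\<bar> \<le> B"
  shows "integrable (measure_pmf M) f"
  by (rule measure_pmf.integrable_const_bound[where B = B]) (use assms in auto)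

lemma integral_bind_pmf_bounded:
  fixes f :: "'b \<Rightarrow> real"
  assumes "\<And>x. \<bar>f x\<bar> \<le> B"
  shows "(\<integral>x. f x \<partial>bind_pmf M K) = (\<integral>x. (\<integral>y. f y \<partial>K x) \<partial>M)"
  unfolding measure_pmf_bind
  by (rule integral_bind[where K = "count_space UNIV" and B = B and B' = 1])
     (use assms in \<open>simp_all add: measure_pmf.finite_measure_axioms measure_pmf_in_subprob_algebra\<close>)

lemma prob_bind_pmf:
  "measure_pmf.prob (bind_pmf M K) X = (\<integral>x. measure_pmf.prob (K x) X \<partial>M)"
  unfolding measure_pmf_bind
  by (rule measure_pmf.measure_bind[where N = "count_space UNIV"])
     (simp_all add: measure_pmf_in_subprob_algebra)

lemma pmf_bind_pmf_ge: "pmf M y * pmf (K y) x \<le> pmf (bind_pmf M K) x"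
proof -
  have "ennreal (pmf M y * pmf (K y) x) = (\<integral>\<^sup>+z. ennreal (pmf (K y) x) * indicator {y} z \<partial>M)"
    by (simp add: emeasure_pmf_single mult.commute ennreal_mult)
  also have "\<dots> \<le> (\<integral>\<^sup>+z. ennreal (pmf (K z) x) \<partial>M)"
    by (intro nn_integral_mono) (auto split: split_indicator)
  also have "\<dots> = ennreal (pmf (bind_pmf M K) x)"
    by (simp add: ennreal_pmf_bind)
  finally show ?thesis
    by (subst (asm) ennreal_le_iff) simp_all
qed

lemma prod_list_pmf_pos:
  "(\<And>x. x \<in> set xs \<Longrightarrow> 0 < pmf M x) \<Longrightarrow> 0 < prod_list (map (pmf M) xs)"
  by (induction xs) auto

definition chain_step :: "event pmf \<Rightarrow> state pmf \<Rightarrow> state pmf" where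
  "chain_step p d = bind_pmf d (\<lambda>s. map_pmf (\<lambda>e. apply_event e s) p)"

lemma chain_dist_eq_funpow: "chain_dist p n s = (chain_step p ^^ n) (return_pmf s)"
  unfolding chain_dist_def chain_step_def[abs_def] by simp

lemma chain_dist_0: "chain_dist p 0 s = return_pmf s"
  by (simp add: chain_dist_eq_funpow)

lemma chain_dist_Suc: "chain_dist p (Suc n) s = chain_step p (chain_dist p n s)"
  by (simp add: chain_dist_eq_funpow)

lemma chain_dist_Suc_0: "chain_dist p (Suc 0) s = map_pmf (\<lambda>e. apply_event e s) p"
  by (simp add: chain_dist_Suc chain_dist_0 chain_step_def bind_return_pmf)

lemma funpow_chain_step_bind_pmf:
  "(chain_step p ^^ m) (bind_pmf d K) = bind_pmf d (\<lambda>x. (chain_step p ^^ m) (K x))"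
  by (induction m) (simp_all add: chain_step_def bind_assoc_pmf)

lemma chain_dist_add:
  "chain_dist p (n + m) s = bind_pmf (chain_dist p n s) (\<lambda>t. chain_dist p m t)"
proof -
  have "chain_dist p (n + m) s = (chain_step p ^^ m) (bind_pmf (chain_dist p n s) return_pmf)"
    by (simp add: chain_dist_eq_funpow funpow_add add.commute bind_return_pmf')
  then show ?thesis
    by (simp add: funpow_chain_step_bind_pmf chain_dist_eq_funpow)
qed

lemma pmf_chain_dist_fold_ge:
  "prod_list (map (pmf p) evs) \<le> pmf (chain_dist p (length evs) s) (fold apply_event evs s)"
proof (induction evs arbitrary: s)
  case Nil
  then show ?case by (simp add: chain_dist_0)
next
  case (Cons e evs)
  have "chain_dist p (length (e # evs)) s
      = bind_pmf p (\<lambda>e. chain_dist p (length evs) (apply_event e s))"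
    using chain_dist_add[of p "Suc 0" "length evs" s] by (simp add: chain_dist_Suc_0 bind_map_pmf)
  moreover have "prod_list (map (pmf p) (e # evs))
      \<le> pmf p e * pmf (chain_dist p (length evs) (apply_event e s)) (fold apply_event evs (apply_event e s))"
    using Cons[of "apply_event e s"] by (simp add: mult_left_mono)
  ultimately show ?case
    using pmf_bind_pmf_ge order_trans by fastforce
qed

subsection \<open>Absorption in a monomorphic state\<close>

definition states_within :: "nat \<Rightarrow> state set" where
  "states_within N = {s. \<forall>j. N \<le> j \<longrightarrow> \<not> s j}"

definition monomorphic_states :: "nat \<Rightarrow> state set" where
  "monomorphic_states N = {(\<lambda>j. j < N), (\<lambda>j. False)}"

lemma apply_event_states_within:
  assumes "valid_rule p N" "e \<in> set_pmf p" "s \<in> states_within N"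
  shows "apply_event e s \<in> states_within N"
proof -
  have "fst e \<subseteq> {..<N}"
    using assms(1,2) unfolding valid_rule_def by blast
  then show ?thesis
    using assms(3) unfolding states_within_def apply_event_def by auto
qed

lemma fold_apply_event_states_within:
  "valid_rule p N \<Longrightarrow> set evs \<subseteq> set_pmf p \<Longrightarrow> s \<in> states_within N
    \<Longrightarrow> fold apply_event evs s \<in> states_within N"
  by (induction evs arbitrary: s) (auto simp: apply_event_states_within)

lemma set_pmf_chain_dist_states_within:
  assumes "valid_rule p N" "s \<in> states_within N"
  shows "set_pmf (chain_dist p n s) \<subseteq> states_within N"
proof (induction n)
  case 0
  then show ?case using assms(2) by (simp add: chain_dist_0)
next
  case (Suc n)
  then show ?case
    by (auto simp: chain_dist_Suc chain_step_def intro: apply_event_states_within[OF assms(1)])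
qed

lemma apply_event_monomorphic:
  "valid_rule p N \<Longrightarrow> e \<in> set_pmf p \<Longrightarrow> s \<in> monomorphic_states N \<Longrightarrow> apply_event e s = s"
  unfolding valid_rule_def apply_event_def monomorphic_states_def by (auto intro!: ext)

lemma chain_dist_monomorphic:
  assumes "valid_rule p N" "s \<in> monomorphic_states N"
  shows "chain_dist p n s = return_pmf s"
proof (induction n)
  case 0
  then show ?case by (simp add: chain_dist_0)
next
  case (Suc n)
  have "map_pmf (\<lambda>e. apply_event e s) p = map_pmf (\<lambda>e. s) p"
    by (rule map_pmf_cong) (simp_all add: apply_event_monomorphic[OF assms(1) _ assms(2)])
  then show ?case
    by (simp add: chain_dist_Suc Suc chain_step_def bind_return_pmf map_pmf_const)
qed

lemma prob_not_monomorphic_chain_dist_add_le: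
  assumes valid: "valid_rule p N" and s: "s \<in> states_within N" and "0 \<le> b"
    and bound: "\<And>t. t \<in> states_within N \<Longrightarrow> t \<notin> monomorphic_states N
        \<Longrightarrow> measure_pmf.prob (chain_dist p m t) (- monomorphic_states N) \<le> b"
  shows "measure_pmf.prob (chain_dist p (n + m) s) (- monomorphic_states N)
    \<le> b * measure_pmf.prob (chain_dist p n s) (- monomorphic_states N)"
proof -
  let ?A = "monomorphic_states N"
  have "measure_pmf.prob (chain_dist p (n + m) s) (- ?A)
      = (\<integral>t. measure_pmf.prob (chain_dist p m t) (- ?A) \<partial>chain_dist p n s)"
    by (simp add: chain_dist_add prob_bind_pmf)
  also have "\<dots> \<le> (\<integral>t. b * indicator (- ?A) t \<partial>chain_dist p n s)"
  proof (rule integral_mono_AE)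
    show "integrable (chain_dist p n s) (\<lambda>t. measure_pmf.prob (chain_dist p m t) (- ?A))"
      by (rule integrable_measure_pmf_bounded[where B = 1]) simp
    show "integrable (chain_dist p n s) (\<lambda>t. b * indicator (- ?A) t)"
      by (rule integrable_measure_pmf_bounded[where B = "\<bar>b\<bar>"]) (simp add: indicator_def)
    have "measure_pmf.prob (chain_dist p m t) (- ?A) \<le> b * indicator (- ?A) t"
      if "t \<in> states_within N" for t
      using bound[OF that] chain_dist_monomorphic[OF valid] by (cases "t \<in> ?A") simp_all
    then show "AE t in chain_dist p n s.
        measure_pmf.prob (chain_dist p m t) (- ?A) \<le> b * indicator (- ?A) t"
      using set_pmf_chain_dist_states_within[OF valid s] by (auto simp: AE_measure_pmf_iff)
  qed
  also have "\<dots> = b * measure_pmf.prob (chain_dist p n s) (- ?A)"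
    by simp
  finally show ?thesis .
qed

lemma fixation_assumption_uniform_absorption:
  assumes valid: "valid_rule p N" and "fixation_assumption p N"
  obtains k c where "0 < c" and "\<And>s. s \<in> states_within N
    \<Longrightarrow> measure_pmf.prob (chain_dist p k s) (- monomorphic_states N) \<le> 1 - c"
proof -
  obtain i evs where pos: "\<forall>e \<in> set evs. 0 < pmf p e"
    and fixing: "\<forall>s j. j < N \<longrightarrow> fold apply_event evs s j = s i"
    using assms(2) unfolding fixation_assumption_def by (elim exE conjE) (rule that)
  define c where "c = prod_list (map (pmf p) evs)"
  have "measure_pmf.prob (chain_dist p (length evs) s) (- monomorphic_states N) \<le> 1 - c"
    if s: "s \<in> states_within N" for s
  proof -
    let ?d = "chain_dist p (length evs) s" and ?t = "fold apply_event evs s"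
    have t: "?t \<in> states_within N"
      using fold_apply_event_states_within[OF valid _ s] pos by (auto simp: set_pmf_eq')
    have "?t = (if s i then (\<lambda>j. j < N) else (\<lambda>j. False))"
    proof
      show "?t j = (if s i then (\<lambda>j. j < N) else (\<lambda>j. False)) j" for j
        using fixing t by (cases "j < N") (auto simp: states_within_def)
    qed
    then have "?t \<in> monomorphic_states N"
      by (simp add: monomorphic_states_def)
    have "c \<le> pmf ?d ?t"
      using pmf_chain_dist_fold_ge unfolding c_def .
    also have "\<dots> \<le> measure_pmf.prob ?d (monomorphic_states N)"
      unfolding measure_pmf_single[symmetric]
      by (rule measure_pmf.finite_measure_mono) (use \<open>?t \<in> monomorphic_states N\<close> in auto)
    finally have "c \<le> measure_pmf.prob ?d (monomorphic_states N)" .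
    then show ?thesis
      using measure_pmf.prob_compl[of "monomorphic_states N" ?d] by (simp add: Compl_eq_Diff_UNIV)
  qed
  moreover have "0 < c"
    using pos by (simp add: c_def prod_list_pmf_pos)
  ultimately show thesis
    using that by blast
qed

lemma decseq_contraction_tendsto_0:
  fixes q :: "nat \<Rightarrow> real"
  assumes "decseq q" and nonneg: "\<And>n. 0 \<le> q n" and "0 < c"
    and contract: "\<And>n. q (n + k) \<le> (1 - c) * q n"
  shows "q \<longlonglongrightarrow> 0"
proof -
  obtain l where l: "q \<longlonglongrightarrow> l"
    using decseq_convergent[OF assms(1), of 0] nonneg by blast
  have "0 \<le> l"
    by (rule LIMSEQ_le_const[OF l]) (use nonneg in auto)
  have "(\<lambda>n. q (n + k)) \<longlonglongrightarrow> l"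
    using LIMSEQ_ignore_initial_segment[OF l] .
  moreover have "(\<lambda>n. (1 - c) * q n) \<longlonglongrightarrow> (1 - c) * l"
    by (intro tendsto_mult_left l)
  ultimately have "l \<le> (1 - c) * l"
    by (rule LIMSEQ_le) (use contract in auto)
  then have "l = 0"
    using \<open>0 \<le> l\<close> \<open>0 < c\<close> by (simp add: algebra_simps mult_le_0_iff)
  then show ?thesis
    using l by simp
qed

lemma prob_not_monomorphic_tendsto_0:
  assumes valid: "valid_rule p N" and "fixation_assumption p N" and s: "s \<in> states_within N"
  shows "(\<lambda>n. measure_pmf.prob (chain_dist p n s) (- monomorphic_states N)) \<longlonglongrightarrow> 0"
proof -
  obtain k c where "0 < c" and absorb: "\<And>t. t \<in> states_within N
      \<Longrightarrow> measure_pmf.prob (chain_dist p k t) (- monomorphic_states N) \<le> 1 - c"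
    using fixation_assumption_uniform_absorption[OF assms(1,2)] by blast
  show ?thesis
  proof (rule decseq_contraction_tendsto_0[where k = k, OF _ _ \<open>0 < c\<close>])
    show "decseq (\<lambda>n. measure_pmf.prob (chain_dist p n s) (- monomorphic_states N))"
      unfolding decseq_Suc_iff
      using prob_not_monomorphic_chain_dist_add_le[OF valid s, of 1 "Suc 0"] by simp
    show "measure_pmf.prob (chain_dist p (n + k) s) (- monomorphic_states N)
        \<le> (1 - c) * measure_pmf.prob (chain_dist p n s) (- monomorphic_states N)" for n
    proof (rule prob_not_monomorphic_chain_dist_add_le[OF valid s _ absorb])
      show "0 \<le> 1 - c"
        using absorb[OF s] measure_nonneg[of "chain_dist p k s" "- monomorphic_states N"] by linarith
    qed
    show "0 \<le> measure_pmf.prob (chain_dist p n s) (- monomorphic_states N)" for n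
      by (rule measure_nonneg)
  qed
qed

subsection \<open>The reproductive-value martingale\<close>

text \<open>Balance equations \<open>\<pi>\<^sub>k d\<^sub>k = \<Sum>\<^sub>i e\<^sub>k\<^sub>i \<pi>\<^sub>i\<close>: the expected weight that site \<open>k\<close> passes on to its
  offspring equals the weight it loses by dying, so the \<open>\<pi>\<close>-weighted number of mutants is a martingale.\<close>

definition reproductive_weights :: "event pmf \<Rightarrow> nat \<Rightarrow> (nat \<Rightarrow> real) \<Rightarrow> bool" where
  "reproductive_weights p N \<pi> \<longleftrightarrow>
     (\<forall>k<N. (\<Sum>i<N. edge_weight p k i * \<pi> i) = \<pi> k * death_rate p N k)"

definition weighted_count :: "(nat \<Rightarrow> real) \<Rightarrow> nat \<Rightarrow> state \<Rightarrow> real" where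
  "weighted_count \<pi> N s = (\<Sum>i<N. \<pi> i * of_bool (s i))"

lemma abs_weighted_count_le: "\<bar>weighted_count \<pi> N s\<bar> \<le> (\<Sum>i<N. \<bar>\<pi> i\<bar>)"
  unfolding weighted_count_def
  by (rule order_trans[OF sum_abs sum_mono]) (simp add: abs_mult)

lemma of_bool_apply_event:
  assumes "valid_rule p N" "e \<in> set_pmf p" "i < N"
  shows "of_bool (apply_event e s i) = of_bool (s i)
    + (\<Sum>k<N. indicator {e. i \<in> fst e \<and> snd e i = k} e * (of_bool (s k) - of_bool (s i)) :: real)"
proof (cases "i \<in> fst e")
  case True
  then have "snd e i < N"
    using assms unfolding valid_rule_def by auto
  then show ?thesis
    using True by (simp add: apply_event_def indicator_def if_distrib[of "\<lambda>x. x * _"] sum.delta' cong: if_cong)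
next
  case False
  then show ?thesis
    by (simp add: apply_event_def)
qed

lemma integral_of_bool_apply_event:
  assumes valid: "valid_rule p N" and "i < N"
  shows "(\<integral>e. of_bool (apply_event e s i) \<partial>p)
    = of_bool (s i) + (\<Sum>k<N. edge_weight p k i * (of_bool (s k) - of_bool (s i)))"
proof -
  define g where "g k e = indicator {e. i \<in> fst e \<and> snd e i = k} e * (of_bool (s k) - of_bool (s i) :: real)"
    for k e
  have "AE e in p. of_bool (apply_event e s i) = of_bool (s i) + (\<Sum>k<N. g k e)"
    unfolding AE_measure_pmf_iff g_def using of_bool_apply_event[OF valid _ \<open>i < N\<close>] by blast
  then have "(\<integral>e. of_bool (apply_event e s i) \<partial>p) = (\<integral>e. of_bool (s i) + (\<Sum>k<N. g k e) \<partial>p)"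
    by (intro integral_cong_AE) simp_all
  also have "\<dots> = of_bool (s i) + (\<Sum>k<N. \<integral>e. g k e \<partial>p)"
  proof -
    have "integrable p (g k)" for k
      by (rule integrable_measure_pmf_bounded[where B = 1]) (simp add: g_def indicator_def)
    then show ?thesis
      by (subst Bochner_Integration.integral_add) (simp_all add: Bochner_Integration.integral_sum)
  qed
  also have "\<dots> = of_bool (s i) + (\<Sum>k<N. edge_weight p k i * (of_bool (s k) - of_bool (s i)))"
    unfolding g_def edge_weight_def by (simp only: integral_mult_left_zero) simp
  finally show ?thesis .
qed

lemma sum_balance_eq:
  fixes w :: "nat \<Rightarrow> nat \<Rightarrow> real"
  assumes "\<And>k. k < N \<Longrightarrow> (\<Sum>i<N. w k i * \<pi> i) = \<pi> k * (\<Sum>j<N. w j k)"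
  shows "(\<Sum>i<N. \<pi> i * (a i + (\<Sum>k<N. w k i * (a k - a i)))) = (\<Sum>i<N. \<pi> i * a i)"
proof -
  have "(\<Sum>i<N. \<Sum>k<N. \<pi> i * w k i * a k) = (\<Sum>k<N. a k * (\<Sum>i<N. w k i * \<pi> i))"
    by (subst sum.swap) (simp add: sum_distrib_left mult_ac)
  also have "\<dots> = (\<Sum>k<N. a k * (\<pi> k * (\<Sum>j<N. w j k)))"
    by (rule sum.cong) (simp_all add: assms)
  also have "\<dots> = (\<Sum>i<N. \<Sum>k<N. \<pi> i * a i * w k i)"
    by (simp add: sum_distrib_left mult_ac)
  finally show ?thesis
    by (simp add: algebra_simps sum.distrib sum_subtractf sum_distrib_left)
qed

lemma integral_weighted_count_apply_event:
  assumes valid: "valid_rule p N" and balance: "reproductive_weights p N \<pi>"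
  shows "(\<integral>e. weighted_count \<pi> N (apply_event e s) \<partial>p) = weighted_count \<pi> N s"
proof -
  have integrable: "integrable p (\<lambda>e. of_bool (apply_event e s i) :: real)" for i
    by (rule integrable_measure_pmf_bounded[where B = 1]) simp
  have "(\<integral>e. weighted_count \<pi> N (apply_event e s) \<partial>p)
      = (\<Sum>i<N. \<pi> i * (\<integral>e. of_bool (apply_event e s i) \<partial>p))"
    unfolding weighted_count_def by (subst Bochner_Integration.integral_sum) (simp_all add: integrable)
  also have "\<dots> = (\<Sum>i<N. \<pi> i * (of_bool (s i)
      + (\<Sum>k<N. edge_weight p k i * (of_bool (s k) - of_bool (s i)))))"
    by (simp add: integral_of_bool_apply_event[OF valid])
  also have "\<dots> = weighted_count \<pi> N s"
    unfolding weighted_count_def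
    by (rule sum_balance_eq) (use balance in \<open>simp add: reproductive_weights_def death_rate_def\<close>)
  finally show ?thesis .
qed

lemma integral_weighted_count_chain_dist:
  assumes "valid_rule p N" and "reproductive_weights p N \<pi>"
  shows "(\<integral>t. weighted_count \<pi> N t \<partial>chain_dist p n s) = weighted_count \<pi> N s"
proof (induction n)
  case 0
  then show ?case by (simp add: chain_dist_0)
next
  case (Suc n)
  have "(\<integral>t. weighted_count \<pi> N t \<partial>chain_dist p (Suc n) s)
      = (\<integral>t. (\<integral>e. weighted_count \<pi> N (apply_event e t) \<partial>p) \<partial>chain_dist p n s)"
    unfolding chain_dist_Suc chain_step_def
    by (simp add: integral_bind_pmf_bounded[OF abs_weighted_count_le])
  then show ?case
    using Suc by (simp add: integral_weighted_count_apply_event[OF assms])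
qed

text \<open>On the two absorbing states the weighted count is the indicator of all-M (for total weight 1),
  so it differs from that indicator only on states that have not yet fixed.\<close>

lemma pmf_all_M_approx_weighted_count:
  assumes "(\<Sum>i<N. \<pi> i) = 1" and "0 < N"
  shows "\<bar>pmf d (\<lambda>j. j < N) - (\<integral>t. weighted_count \<pi> N t \<partial>d)\<bar>
    \<le> (\<Sum>i<N. \<bar>\<pi> i\<bar>) * measure_pmf.prob d (- monomorphic_states N)"
proof -
  let ?M = "\<Sum>i<N. \<bar>\<pi> i\<bar>" and ?A = "monomorphic_states N"
  define f where "f t = weighted_count \<pi> N t - indicator {\<lambda>j. j < N} t" for t
  have "weighted_count \<pi> N (\<lambda>j. j < N) = 1" "weighted_count \<pi> N (\<lambda>j. False) = 0"
    using assms(1) by (simp_all add: weighted_count_def)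
  moreover have "(\<lambda>j. False) \<noteq> (\<lambda>j. j < N)"
    using \<open>0 < N\<close> by (metis less_irrefl)
  ultimately have f_absorbed: "f t = weighted_count \<pi> N t * indicator (- ?A) t" for t
    by (cases "t \<in> ?A") (auto simp: f_def monomorphic_states_def)
  have "integrable d (indicator {\<lambda>j. j < N} :: state \<Rightarrow> real)"
    by (rule integrable_measure_pmf_bounded[where B = 1]) (simp add: indicator_def)
  moreover have "integrable d (weighted_count \<pi> N)"
    by (rule integrable_measure_pmf_bounded[OF abs_weighted_count_le])
  ultimately have "(\<integral>t. weighted_count \<pi> N t \<partial>d) - pmf d (\<lambda>j. j < N) = (\<integral>t. f t \<partial>d)"
    unfolding f_def by (simp add: measure_pmf_single)
  moreover have "\<bar>\<integral>t. f t \<partial>d\<bar> \<le> (\<integral>t. ?M * indicator (- ?A) t \<partial>d)"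
  proof (rule order_trans[OF integral_norm_bound[of d f, unfolded real_norm_def]])
    show "(\<integral>t. \<bar>f t\<bar> \<partial>d) \<le> (\<integral>t. ?M * indicator (- ?A) t \<partial>d)"
    proof (rule integral_mono)
      show "integrable d (\<lambda>t. \<bar>f t\<bar>)" "integrable d (\<lambda>t. ?M * indicator (- ?A) t)"
        by (rule integrable_measure_pmf_bounded[where B = ?M],
            simp add: f_absorbed abs_mult indicator_def abs_weighted_count_le)+
      show "\<bar>f t\<bar> \<le> ?M * indicator (- ?A) t" for t
        by (simp add: f_absorbed abs_mult indicator_def abs_weighted_count_le)
    qed
  qed
  ultimately show ?thesis
    by (simp add: abs_minus_commute)
qed

lemma fix_prob_eq_reproductive_weight:
  assumes valid: "valid_rule p N" and fixation: "fixation_assumption p N"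
    and balance: "reproductive_weights p N \<pi>" and total: "(\<Sum>i<N. \<pi> i) = 1" and "i < N"
  shows "fix_prob p N i = \<pi> i"
proof -
  define s :: state where "s = (\<lambda>j. j = i)"
  define M where "M = (\<Sum>i<N. \<bar>\<pi> i\<bar>)"
  define q where "q n = measure_pmf.prob (chain_dist p n s) (- monomorphic_states N)" for n
  have "s \<in> states_within N"
    using \<open>i < N\<close> by (auto simp: s_def states_within_def)
  have "weighted_count \<pi> N s = (\<Sum>j<N. if j = i then \<pi> j else 0)"
    unfolding weighted_count_def s_def by (rule sum.cong) simp_all
  also have "\<dots> = \<pi> i"
    using \<open>i < N\<close> by (simp add: sum.delta')
  finally have "(\<integral>t. weighted_count \<pi> N t \<partial>chain_dist p n s) = \<pi> i" for n
    by (simp add: integral_weighted_count_chain_dist[OF valid balance])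
  then have bound: "\<bar>pmf (chain_dist p n s) (\<lambda>j. j < N) - \<pi> i\<bar> \<le> M * q n" for n
    using pmf_all_M_approx_weighted_count[OF total, of "chain_dist p n s"] \<open>i < N\<close>
    by (simp add: M_def q_def)
  have "q \<longlonglongrightarrow> 0"
    unfolding q_def by (rule prob_not_monomorphic_tendsto_0[OF valid fixation \<open>s \<in> states_within N\<close>])
  have "(\<lambda>n. pmf (chain_dist p n s) (\<lambda>j. j < N) - \<pi> i) \<longlonglongrightarrow> 0"
  proof (rule Lim_null_comparison)
    show "\<forall>\<^sub>F n in sequentially. norm (pmf (chain_dist p n s) (\<lambda>j. j < N) - \<pi> i) \<le> M * q n"
      using bound by simp
    show "(\<lambda>n. M * q n) \<longlonglongrightarrow> 0"
      using tendsto_mult_right_zero[OF \<open>q \<longlonglongrightarrow> 0\<close>] by simp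
  qed
  then have "(\<lambda>n. pmf (chain_dist p n s) (\<lambda>j. j < N)) \<longlonglongrightarrow> \<pi> i"
    by (simp add: LIM_zero_iff)
  then show ?thesis
    unfolding fix_prob_def s_def[symmetric] by (rule limI)
qed

subsection \<open>The upstream-downstream model\<close>

lemma total_B_eq_sum_death_rate: "total_B p N = (\<Sum>j<N. death_rate p N j)"
  unfolding total_B_def death_rate_def by (rule sum.swap)

lemma clock_K_gt_iff:
  assumes "0 < u" and "0 < N"
  shows "u < clock_K p N u \<longleftrightarrow> 1 / real N < overall_rho p N"
proof -
  have "u < clock_K p N u \<longleftrightarrow> u * 1 < u * (real N * overall_rho p N)"
    by (simp add: clock_K_def mult_ac)
  also have "\<dots> \<longleftrightarrow> 1 / real N < overall_rho p N"
    using assms by (simp add: field_simps)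
  finally show ?thesis .
qed

context
  fixes p :: "event pmf" and N :: nat and U D :: "nat set" and eU eD eR eL :: real
  assumes model: "upstream_downstream p N U D eU eD eR eL"
begin

lemma sum_upstream_downstream:
  fixes g :: "nat \<Rightarrow> real" and x y :: real
  assumes "\<And>i. i \<in> U \<Longrightarrow> g i = x" and "\<And>i. i \<in> D \<Longrightarrow> g i = y"
  shows "(\<Sum>i<N. g i) = card U * x + card D * y"
proof -
  have sites: "{..<N} = U \<union> D" and "U \<inter> D = {}"
    using model by (simp_all add: upstream_downstream_def)
  then have "finite U" "finite D"
    by (metis finite_Un finite_lessThan)+
  then have "(\<Sum>i<N. g i) = (\<Sum>i\<in>U. g i) + (\<Sum>i\<in>D. g i)"
    unfolding sites using \<open>U \<inter> D = {}\<close> by (rule sum.union_disjoint)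
  also have "\<dots> = card U * x + card D * y"
    using assms by simp
  finally show ?thesis .
qed

lemma death_rate_upstream:
  assumes "i \<in> U" shows "death_rate p N i = card U * eU + card D * eL"
  using model assms unfolding death_rate_def upstream_downstream_def
  by (subst sum_upstream_downstream[where x = eU and y = eL]) auto

lemma death_rate_downstream:
  assumes "i \<in> D" shows "death_rate p N i = card U * eR + card D * eD"
  using model assms unfolding death_rate_def upstream_downstream_def
  by (subst sum_upstream_downstream[where x = eR and y = eD]) auto

text \<open>Reproductive values are proportional to the rate of sending offspring across the boundary.\<close>

lemma reproductive_weights_upstream_downstream:
  "reproductive_weights p N (\<lambda>k. c * (if k \<in> U then eR else eL))"
  unfolding reproductive_weights_def
proof (intro allI impI)
  fix k assume "k < N"
  then consider "k \<in> U" | "k \<in> D"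
    using model by (auto simp: upstream_downstream_def)
  then show "(\<Sum>i<N. edge_weight p k i * (c * (if i \<in> U then eR else eL)))
      = c * (if k \<in> U then eR else eL) * death_rate p N k"
  proof cases
    case 1
    then show ?thesis
      using model death_rate_upstream
      by (subst sum_upstream_downstream[where x = "eU * (c * eR)" and y = "eR * (c * eL)"])
         (auto simp: upstream_downstream_def algebra_simps)
  next
    case 2
    moreover have "k \<notin> U"
      using 2 model by (auto simp: upstream_downstream_def)
    ultimately show ?thesis
      using model death_rate_downstream
      by (subst sum_upstream_downstream[where x = "eL * (c * eR)" and y = "eD * (c * eL)"])
         (auto simp: upstream_downstream_def algebra_simps)
  qed
qed

lemma fix_prob_upstream_downstream:
  assumes valid: "valid_rule p N" and fixation: "fixation_assumption p N"
    and "eL < eR" and "i < N"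
  shows "fix_prob p N i = (if i \<in> U then eR else eL) / (card U * eR + card D * eL)"
proof -
  define Z where "Z = card U * eR + card D * eL"
  have "U \<noteq> {}" "U \<subseteq> {..<N}" "0 \<le> eL"
    using model by (auto simp: upstream_downstream_def)
  then have "0 < Z"
    using \<open>eL < eR\<close> finite_subset[of U "{..<N}"] by (simp add: Z_def add_pos_nonneg card_gt_0_iff)
  have "(\<Sum>k<N. 1 / Z * (if k \<in> U then eR else eL)) = 1"
    using \<open>0 < Z\<close> model
    by (subst sum_upstream_downstream[where x = "eR / Z" and y = "eL / Z"])
       (auto simp: upstream_downstream_def Z_def add_divide_distrib[symmetric])
  then have "fix_prob p N i = 1 / Z * (if i \<in> U then eR else eL)"
    by (intro fix_prob_eq_reproductive_weight[OF valid fixation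
          reproductive_weights_upstream_downstream _ \<open>i < N\<close>])
  then show ?thesis
    by (simp add: Z_def)
qed

lemma overall_rho_upstream_downstream:
  fixes dU dD :: real
  assumes fix_prob: "valid_rule p N" "fixation_assumption p N" "eL < eR"
    and dU: "\<forall>i\<in>U. death_rate p N i = dU" and dD: "\<forall>j\<in>D. death_rate p N j = dD"
  shows "overall_rho p N = (card U * dU * eR + card D * dD * eL)
    / ((card U * dU + card D * dD) * (card U * eR + card D * eL))"
proof -
  define Z where "Z = card U * eR + card D * eL"
  have sites: "U \<union> D = {..<N}" and "U \<inter> D = {}"
    using model by (simp_all add: upstream_downstream_def)
  have "(\<Sum>i<N. death_rate p N i * fix_prob p N i) = card U * (dU * (eR / Z)) + card D * (dD * (eL / Z))"
  proof (rule sum_upstream_downstream)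
    show "death_rate p N i * fix_prob p N i = dU * (eR / Z)" if "i \<in> U" for i
    proof -
      have "i < N"
        using that sites by auto
      then show ?thesis
        using that dU by (simp add: fix_prob_upstream_downstream[OF fix_prob] Z_def)
    qed
    show "death_rate p N i * fix_prob p N i = dD * (eL / Z)" if "i \<in> D" for i
    proof -
      have "i < N" "i \<notin> U"
        using that sites \<open>U \<inter> D = {}\<close> by auto
      then show ?thesis
        using that dD by (simp add: fix_prob_upstream_downstream[OF fix_prob] Z_def)
    qed
  qed
  also have "\<dots> = (card U * dU * eR + card D * dD * eL) / Z"
    by (simp add: add_divide_distrib mult.assoc)
  finally have "(\<Sum>i<N. death_rate p N i * fix_prob p N i) = (card U * dU * eR + card D * dD * eL) / Z" .
  moreover have "total_B p N = card U * dU + card D * dD"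
    unfolding total_B_eq_sum_death_rate using dU dD by (intro sum_upstream_downstream) auto
  ultimately show ?thesis
    by (simp add: overall_rho_def Z_def)
qed

end

lemma upstream_downstream_rho_gt_iff:
  fixes a b eR eL dU dD :: real
  assumes "0 < a" "0 < b" "eL < eR" "0 \<le> eL" "0 \<le> dU" "0 < dD"
  shows "1 / (a + b) < (a * dU * eR + b * dD * eL) / ((a * dU + b * dD) * (a * eR + b * eL))
    \<longleftrightarrow> dD < dU"
proof -
  define X where "X = a * dU * eR + b * dD * eL"
  define P where "P = (a * dU + b * dD) * (a * eR + b * eL)"
  have "0 < P"
    using assms by (simp add: P_def add_nonneg_pos add_pos_nonneg)
  then have "1 / (a + b) < X / P \<longleftrightarrow> P < X * (a + b)"
    using assms by (simp add: pos_less_divide_eq pos_divide_less_eq)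
  moreover have "X * (a + b) - P = (a * b * (eR - eL)) * (dU - dD)"
    by (simp add: X_def P_def algebra_simps)
  moreover have "0 < a * b * (eR - eL)"
    using assms by simp
  then have "0 < (a * b * (eR - eL)) * (dU - dD) \<longleftrightarrow> dD < dU"
    using mult_less_cancel_left_pos[of "a * b * (eR - eL)" 0 "dU - dD"] by simp
  ultimately show ?thesis
    unfolding X_def P_def by linarith
qed

theorem mainTheorem8:
  fixes p :: "event pmf" and N :: nat and U D :: "nat set"
    and eU eD eR eL dU dD u :: real
  assumes "valid_rule p N"
    and "fixation_assumption p N"
    and "upstream_downstream p N U D eU eD eR eL"
    and "eR > eL"
    and "\<forall>i\<in>U. death_rate p N i = dU"
    and "\<forall>j\<in>D. death_rate p N j = dD"
    and "u > 0"
  shows "(overall_rho p N > 1 / real N \<longleftrightarrow> dU > dD)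
       \<and> (clock_K p N u > u \<longleftrightarrow> dU > dD)"
proof -
  have sites: "U \<union> D = {..<N}" "U \<inter> D = {}" and "U \<noteq> {}" "D \<noteq> {}"
    and "0 \<le> eU" "0 \<le> eD" "0 \<le> eL"
    using assms(3) by (simp_all add: upstream_downstream_def)
  then have "finite U" "finite D"
    by (metis finite_Un finite_lessThan)+
  then have "card U + card D = N" and U_pos: "0 < real (card U)" and D_pos: "0 < real (card D)"
    using sites \<open>U \<noteq> {}\<close> \<open>D \<noteq> {}\<close> by (auto simp flip: card_Un_disjoint)
  obtain i j where "i \<in> U" "j \<in> D"
    using \<open>U \<noteq> {}\<close> \<open>D \<noteq> {}\<close> by blast
  then have "dU = card U * eU + card D * eL" "dD = card U * eR + card D * eD"
    using death_rate_upstream[OF assms(3)] death_rate_downstream[OF assms(3)] assms(5,6) by auto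
  then have "0 \<le> dU" "0 < dD"
    using U_pos \<open>0 \<le> eU\<close> \<open>0 \<le> eD\<close> \<open>0 \<le> eL\<close> assms(4) by (simp_all add: add_pos_nonneg)
  then have "1 / real N < overall_rho p N \<longleftrightarrow> dD < dU"
    using upstream_downstream_rho_gt_iff[OF U_pos D_pos assms(4) \<open>0 \<le> eL\<close>]
      overall_rho_upstream_downstream[OF assms(3,1,2,4,5,6)] \<open>card U + card D = N\<close> by auto
  moreover have "0 < N"
    using \<open>card U + card D = N\<close> U_pos by linarith
  ultimately show ?thesis
    using clock_K_gt_iff[OF assms(7)] by blast
qed

end
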